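(* Let $k$ be a field and $\mathrm{Lin}\colon(\mathrm{Cospan}(\mathrm{FinSet}),+)\to(\mathrm{Set},\times)$ the lax symmetric monoidal functor sending a finite set $N$ to the set of linear subspaces of $k^N$, a function $f\colon N\to M$ to the map $L\mapsto\{v\in k^M\mid v\circ f\in L\}$, and an opposite function $g^{\mathrm{op}}\colon N\to M$ (for $g\colon M\to N$) to $L\mapsto\{u\circ g\mid u\in L\}$. Taking the factorisation system $(\mathcal I_{\mathrm{FinSet}},\mathrm{FinSet})$ (isomorphisms, all morphisms) on $\mathrm{FinSet}$, the decorated corelation category $\mathrm{Lin}\mathrm{Corel}$ has, as morphisms $X\to Y$, exactly the linear subspaces of $k^{X+Y}\cong k^X\oplus k^Y$, composed by relational composition; hence $\mathrm{Lin}\mathrm{Corel}$ is isomorphic to the category of linear relations between the finite-dimensional spaces $k^X$.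
   Context: For $(\mathcal E,\mathcal M)$ a costable factorisation system on $\mathcal C$ and $F\colon\mathcal C;\mathcal M^{\mathrm{op}}\to\mathrm{Set}$ lax symmetric monoidal (here $\mathcal C;\mathcal M^{\mathrm{op}}=\mathrm{Cospan}(\mathrm{FinSet})$ since $\mathcal M=\mathrm{FinSet}$), $F\mathrm{Corel}$ has morphisms isomorphism classes of pairs (cospan $X\xrightarrow{i}N\xleftarrow{o}Y$ with $[i,o]\in\mathcal E$, element $s\in FN$); composition of $(X\to N\leftarrow Y,s)$ and $(Y\to M\leftarrow Z,t)$: form the pushout $N+_YM$ with maps $j_N,j_M$, factor $[j_Ni_X,j_Mo_Z]=m\circ e$ with $e\in\mathcal E$, and decorate the cospan $X\to\overline{N+_YM}\leftarrow Z$ by $F(m^{\mathrm{op}})F[j_N,j_M]\varphi_{N,M}(s,t)$, where $m^{\mathrm{op}}=(\xrightarrow{1}\xleftarrow{m})$. The coherence map $\varphi_{N,M}$ of $\mathrm{Lin}$ sends $(L,L')$ to $L\oplus L'\subseteq k^{N+M}$. *)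

theory Defs
  imports Main
begin

text \<open>Finite sets are finite subsets of a type; apexes of cospans are finite sets of naturals.\<close>

definition kpow :: "'a set \<Rightarrow> ('a \<Rightarrow> 'k::field) set" where
  "kpow A = {v. \<forall>a. a \<notin> A \<longrightarrow> v a = 0}"

definition lin_subspace :: "'a set \<Rightarrow> ('a \<Rightarrow> 'k::field) set \<Rightarrow> bool" where
  "lin_subspace A L \<longleftrightarrow> L \<subseteq> kpow A \<and> (\<lambda>_. 0) \<in> L
     \<and> (\<forall>u\<in>L. \<forall>v\<in>L. (\<lambda>a. u a + v a) \<in> L)
     \<and> (\<forall>c. \<forall>u\<in>L. (\<lambda>a. c * u a) \<in> L)"

definition lin_push :: "'a set \<Rightarrow> 'b set \<Rightarrow> ('a \<Rightarrow> 'b) \<Rightarrow> ('a \<Rightarrow> 'k::field) set \<Rightarrow> ('b \<Rightarrow> 'k) set" where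
  "lin_push A B f L = {v \<in> kpow B. (\<lambda>a. if a \<in> A then v (f a) else 0) \<in> L}"

definition lin_pull :: "'m set \<Rightarrow> ('m \<Rightarrow> 'n) \<Rightarrow> ('n \<Rightarrow> 'k::field) set \<Rightarrow> ('m \<Rightarrow> 'k) set" where
  "lin_pull M g L = (\<lambda>u m. if m \<in> M then u (g m) else 0) ` L"

definition lin_sum :: "'a set \<Rightarrow> 'b set \<Rightarrow> ('a \<Rightarrow> 'k::field) set \<Rightarrow> ('b \<Rightarrow> 'k) set \<Rightarrow> ('a + 'b \<Rightarrow> 'k) set" where
  "lin_sum A B L1 L2 = {w \<in> kpow (A <+> B). (\<lambda>a. w (Inl a)) \<in> L1 \<and> (\<lambda>b. w (Inr b)) \<in> L2}"

record ('x, 'y, 'k) dcospan =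
  apex :: "nat set"
  leg_in :: "'x \<Rightarrow> nat"
  leg_out :: "'y \<Rightarrow> nat"
  deco :: "(nat \<Rightarrow> 'k) set"

text \<open>Decorated corelation: [i,o] lies in E (is an isomorphism).\<close>
definition is_dcorel :: "'x set \<Rightarrow> 'y set \<Rightarrow> ('x, 'y, 'k::field) dcospan \<Rightarrow> bool" where
  "is_dcorel X Y c \<longleftrightarrow> finite X \<and> finite Y \<and> finite (apex c)
     \<and> bij_betw (case_sum (leg_in c) (leg_out c)) (X <+> Y) (apex c)
     \<and> lin_subspace (apex c) (deco c)"

text \<open>Isomorphism of decorated corelations (equality of morphisms of Lin Corel).\<close>
definition dcorel_iso :: "'x set \<Rightarrow> 'y set \<Rightarrow> ('x, 'y, 'k::field) dcospan \<Rightarrow> ('x, 'y, 'k) dcospan \<Rightarrow> bool" where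
  "dcorel_iso X Y c c' \<longleftrightarrow> (\<exists>b. bij_betw b (apex c) (apex c')
     \<and> (\<forall>x\<in>X. b (leg_in c x) = leg_in c' x) \<and> (\<forall>y\<in>Y. b (leg_out c y) = leg_out c' y)
     \<and> deco c' = lin_push (apex c) (apex c') b (deco c))"

text \<open>Pushout N +_Y M of N \<leftarrow>o Y \<rightarrow>i M in FinSet, as a quotient of N + M.\<close>
definition po_rel :: "nat set \<Rightarrow> nat set \<Rightarrow> 'y set \<Rightarrow> ('y \<Rightarrow> nat) \<Rightarrow> ('y \<Rightarrow> nat) \<Rightarrow> ((nat + nat) \<times> (nat + nat)) set" where
  "po_rel N M Y o1 i2 =
     (Id_on (N <+> M) \<union> {(Inl (o1 y), Inr (i2 y)) | y. y \<in> Y} \<union> {(Inr (i2 y), Inl (o1 y)) | y. y \<in> Y})\<^sup>*"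

definition po_apex :: "nat set \<Rightarrow> nat set \<Rightarrow> 'y set \<Rightarrow> ('y \<Rightarrow> nat) \<Rightarrow> ('y \<Rightarrow> nat) \<Rightarrow> (nat + nat) set set" where
  "po_apex N M Y o1 i2 = (N <+> M) // po_rel N M Y o1 i2"

definition po_inj :: "nat set \<Rightarrow> nat set \<Rightarrow> 'y set \<Rightarrow> ('y \<Rightarrow> nat) \<Rightarrow> ('y \<Rightarrow> nat) \<Rightarrow> nat + nat \<Rightarrow> (nat + nat) set" where
  "po_inj N M Y o1 i2 a = po_rel N M Y o1 i2 `` {a}"

text \<open>c is a composite of c1 : X \<rightarrow> Y and c2 : Y \<rightarrow> Z: form the pushout, factor
  [j_N i_X, j_M o_Z] = m \<circ> e with e : X + Z \<rightarrow> apex c an isomorphism (the legs of c),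
  and decorate by Lin(m^op) Lin[j_N,j_M] \<phi>(s,t).\<close>
definition is_dcorel_comp :: "'x set \<Rightarrow> 'y set \<Rightarrow> 'z set \<Rightarrow> ('x, 'y, 'k::field) dcospan
     \<Rightarrow> ('y, 'z, 'k) dcospan \<Rightarrow> ('x, 'z, 'k) dcospan \<Rightarrow> bool" where
  "is_dcorel_comp X Y Z c1 c2 c \<longleftrightarrow>
     (let N = apex c1; M = apex c2;
          j = po_inj N M Y (leg_out c1) (leg_in c2);
          P = po_apex N M Y (leg_out c1) (leg_in c2);
          e = case_sum (leg_in c) (leg_out c);
          f = case_sum (\<lambda>x. j (Inl (leg_in c1 x))) (\<lambda>z. j (Inr (leg_out c2 z)));
          m = (\<lambda>n. f (inv_into (X <+> Z) e n))
      in finite (apex c) \<and> bij_betw e (X <+> Z) (apex c)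
         \<and> deco c = lin_pull (apex c) m (lin_push (N <+> M) P j (lin_sum N M (deco c1) (deco c2))))"

text \<open>Identity decorated corelation on X: the identity cospan, with [1,1] = m \<circ> e, e iso,
  decorated by Lin(m^op) Lin(! : \<emptyset> \<rightarrow> X) of the unit element k^\<emptyset> of Lin \<emptyset>.\<close>
definition is_dcorel_id :: "'x set \<Rightarrow> ('x, 'x, 'k::field) dcospan \<Rightarrow> bool" where
  "is_dcorel_id X c \<longleftrightarrow>
     (let e = case_sum (leg_in c) (leg_out c);
          m = (\<lambda>n. case_sum id id (inv_into (X <+> X) e n))
      in finite (apex c) \<and> bij_betw e (X <+> X) (apex c)
         \<and> deco c = lin_pull (apex c) m
              (lin_push ({} :: 'x set) X (\<lambda>_. undefined) (kpow ({} :: 'x set))))"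

definition to_rel :: "'x set \<Rightarrow> 'y set \<Rightarrow> ('x, 'y, 'k::field) dcospan \<Rightarrow> ('x + 'y \<Rightarrow> 'k) set" where
  "to_rel X Y c = lin_pull (X <+> Y) (case_sum (leg_in c) (leg_out c)) (deco c)"

definition lrel_comp :: "'x set \<Rightarrow> 'y set \<Rightarrow> 'z set \<Rightarrow> ('x + 'y \<Rightarrow> 'k::field) set
     \<Rightarrow> ('y + 'z \<Rightarrow> 'k) set \<Rightarrow> ('x + 'z \<Rightarrow> 'k) set" where
  "lrel_comp X Y Z R S = {w \<in> kpow (X <+> Z). \<exists>v \<in> kpow Y.
      case_sum (\<lambda>x. w (Inl x)) v \<in> R \<and> case_sum v (\<lambda>z. w (Inr z)) \<in> S}"

definition lrel_id :: "'x set \<Rightarrow> ('x + 'x \<Rightarrow> 'k::field) set" where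
  "lrel_id X = {w \<in> kpow (X <+> X). \<forall>x\<in>X. w (Inl x) = w (Inr x)}"

end

theory Submission
  imports Defs
begin

text \<open>The legs of a decorated corelation form a bijection X + Y \<cong> N, and pulling decorations back
  along a bijection is invertible; so a corelation X \<rightarrow> Y is the same thing as a subspace of
  k^(X+Y), and two corelations are isomorphic exactly when these subspaces coincide.
  A vector on the pushout N +_Y M is the same as a pair of vectors on N and M that agree on the
  images of Y. Hence the composite decoration, pulled back to X + Z, consists of the boundary
  values of pairs (u1, u2) \<in> s \<times> t agreeing on Y, which is relational composition. The
  identity is decorated by all of k^X pulled back along the codiagonal X + X \<rightarrow> X, i.e. by the
  diagonal.\<close>

lemma Inl_in_Plus_iff [simp]: "Inl a \<in> A <+> B \<longleftrightarrow> a \<in> A"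
  and Inr_in_Plus_iff [simp]: "Inr b \<in> A <+> B \<longleftrightarrow> b \<in> B"
  by auto

section \<open>Linear subspaces and the functor Lin\<close>

lemma lin_subspaceI:
  assumes "L \<subseteq> kpow A" and "(\<lambda>_. 0) \<in> L"
    and "\<And>u v. u \<in> L \<Longrightarrow> v \<in> L \<Longrightarrow> (\<lambda>a. u a + v a) \<in> L"
    and "\<And>c u. u \<in> L \<Longrightarrow> (\<lambda>a. c * u a) \<in> L"
  shows "lin_subspace A L"
  using assms unfolding lin_subspace_def by blast

lemma
  assumes "lin_subspace A L"
  shows lin_subspace_subset_kpow: "L \<subseteq> kpow A"
    and lin_subspace_zero: "(\<lambda>_. 0) \<in> L"
    and lin_subspace_add: "u \<in> L \<Longrightarrow> v \<in> L \<Longrightarrow> (\<lambda>a. u a + v a) \<in> L"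
    and lin_subspace_scale: "u \<in> L \<Longrightarrow> (\<lambda>a. c * u a) \<in> L"
  using assms unfolding lin_subspace_def by blast+

lemma lin_subspace_kpow: "lin_subspace A (kpow A)"
  by (rule lin_subspaceI) (auto simp: kpow_def)

lemma lin_subspace_lin_pull:
  fixes L :: "('n \<Rightarrow> 'k::field) set" and g :: "'m \<Rightarrow> 'n"
  assumes L: "lin_subspace N L"
  shows "lin_subspace M (lin_pull M g L)"
proof (rule lin_subspaceI)
  let ?F = "\<lambda>u m. if m \<in> M then u (g m) else (0::'k)"
  show "lin_pull M g L \<subseteq> kpow M"
    unfolding lin_pull_def kpow_def by auto
  have "(\<lambda>_. 0) = ?F (\<lambda>_. 0)" by auto
  then show "(\<lambda>_. 0) \<in> lin_pull M g L"
    unfolding lin_pull_def using lin_subspace_zero[OF L] by (rule image_eqI)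
  show "(\<lambda>a. u a + v a) \<in> lin_pull M g L" if uv: "u \<in> lin_pull M g L" "v \<in> lin_pull M g L" for u v
  proof -
    obtain u' v' where "u' \<in> L" "v' \<in> L" "u = ?F u'" "v = ?F v'"
      using uv unfolding lin_pull_def by (elim imageE) blast
    then have "(\<lambda>a. u a + v a) = ?F (\<lambda>a. u' a + v' a)" "(\<lambda>a. u' a + v' a) \<in> L"
      using lin_subspace_add[OF L] by auto
    then show ?thesis unfolding lin_pull_def by (rule image_eqI)
  qed
  show "(\<lambda>a. c * u a) \<in> lin_pull M g L" if u: "u \<in> lin_pull M g L" for c u
  proof -
    obtain u' where "u' \<in> L" "u = ?F u'"
      using u unfolding lin_pull_def by (elim imageE) blast
    then have "(\<lambda>a. c * u a) = ?F (\<lambda>a. c * u' a)" "(\<lambda>a. c * u' a) \<in> L"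
      using lin_subspace_scale[OF L] by auto
    then show ?thesis unfolding lin_pull_def by (rule image_eqI)
  qed
qed

lemma lin_subspace_lin_push:
  fixes L :: "('a \<Rightarrow> 'k::field) set" and f :: "'a \<Rightarrow> 'b"
  assumes L: "lin_subspace A L"
  shows "lin_subspace B (lin_push A B f L)"
proof (rule lin_subspaceI)
  let ?R = "\<lambda>v a. if a \<in> A then v (f a) else (0::'k)"
  have [simp]: "?R (\<lambda>_. 0) = (\<lambda>_. 0)" "\<And>u v. ?R (\<lambda>a. u a + v a) = (\<lambda>a. ?R u a + ?R v a)"
    "\<And>c u. ?R (\<lambda>a. c * u a) = (\<lambda>a. c * ?R u a)"
    by (auto simp: fun_eq_iff)
  show "lin_push A B f L \<subseteq> kpow B" "(\<lambda>_. 0) \<in> lin_push A B f L"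
    using lin_subspace_zero[OF L] unfolding lin_push_def kpow_def by auto
  show "(\<lambda>a. u a + v a) \<in> lin_push A B f L" if "u \<in> lin_push A B f L" "v \<in> lin_push A B f L" for u v
    using that lin_subspace_add[OF L] unfolding lin_push_def kpow_def by simp
  show "(\<lambda>a. c * u a) \<in> lin_push A B f L" if "u \<in> lin_push A B f L" for c u
    using that lin_subspace_scale[OF L] unfolding lin_push_def kpow_def by simp
qed

lemma lin_subspace_lin_sum:
  assumes L1: "lin_subspace A L1" and L2: "lin_subspace B L2"
  shows "lin_subspace (A <+> B) (lin_sum A B L1 L2)"
proof (rule lin_subspaceI)
  show "lin_sum A B L1 L2 \<subseteq> kpow (A <+> B)" "(\<lambda>_. 0) \<in> lin_sum A B L1 L2"
    using lin_subspace_zero[OF L1] lin_subspace_zero[OF L2]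
    unfolding lin_sum_def kpow_def by auto
  show "(\<lambda>a. u a + v a) \<in> lin_sum A B L1 L2" if "u \<in> lin_sum A B L1 L2" "v \<in> lin_sum A B L1 L2" for u v
    using that lin_subspace_add[OF L1, of "\<lambda>a. u (Inl a)" "\<lambda>a. v (Inl a)"]
      lin_subspace_add[OF L2, of "\<lambda>a. u (Inr a)" "\<lambda>a. v (Inr a)"]
    unfolding lin_sum_def kpow_def by simp
  show "(\<lambda>a. c * u a) \<in> lin_sum A B L1 L2" if "u \<in> lin_sum A B L1 L2" for c u
    using that lin_subspace_scale[OF L1, of "\<lambda>a. u (Inl a)" c]
      lin_subspace_scale[OF L2, of "\<lambda>a. u (Inr a)" c]
    unfolding lin_sum_def kpow_def by simp
qed

lemma lin_pull_cong: "(\<And>a. a \<in> A \<Longrightarrow> g a = g' a) \<Longrightarrow> lin_pull A g L = lin_pull A g' L"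
  unfolding lin_pull_def by (rule image_cong) auto

lemma lin_pull_lin_pull:
  assumes "h ` A \<subseteq> N"
  shows "lin_pull A h (lin_pull N g L) = lin_pull A (\<lambda>a. g (h a)) L"
  unfolding lin_pull_def image_image
  by (rule image_cong) (use assms in \<open>auto simp: image_subset_iff\<close>)

lemma lin_pull_id:
  assumes "L \<subseteq> kpow A"
  shows "lin_pull A (\<lambda>a. a) L = L"
proof -
  have "lin_pull A (\<lambda>a. a) L = (\<lambda>u. u) ` L"
    unfolding lin_pull_def by (rule image_cong) (use assms in \<open>auto simp: kpow_def fun_eq_iff\<close>)
  then show ?thesis by simp
qed

lemma lin_pull_bij_inv_into:
  assumes "bij_betw e A N"
  shows "lin_pull A e (lin_pull N (\<lambda>n. f (inv_into A e n)) L) = lin_pull A f L"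
proof -
  have "lin_pull A e (lin_pull N (\<lambda>n. f (inv_into A e n)) L) = lin_pull A (\<lambda>a. f (inv_into A e (e a))) L"
    using assms by (intro lin_pull_lin_pull) (auto simp: bij_betw_def)
  also have "\<dots> = lin_pull A f L"
    using assms by (intro lin_pull_cong) (simp add: bij_betw_def)
  finally show ?thesis .
qed

lemma lin_pull_inv_into_lin_pull:
  assumes "bij_betw e A N" and "D \<subseteq> kpow N"
  shows "lin_pull N (inv_into A e) (lin_pull A e D) = D"
proof -
  have "lin_pull N (inv_into A e) (lin_pull A e D) = lin_pull N (\<lambda>n. e (inv_into A e n)) D"
    using assms(1) by (intro lin_pull_lin_pull) (auto simp: bij_betw_def inv_into_into)
  also have "\<dots> = lin_pull N (\<lambda>n. n) D"
    using assms(1) by (intro lin_pull_cong) (simp add: bij_betw_def f_inv_into_f)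
  finally show ?thesis
    using lin_pull_id[OF assms(2)] by simp
qed

lemma lin_pull_bij_inject:
  assumes "bij_betw e A N" and "D \<subseteq> kpow N" and "D' \<subseteq> kpow N"
  shows "lin_pull A e D = lin_pull A e D' \<longleftrightarrow> D = D'"
  using lin_pull_inv_into_lin_pull[OF assms(1)] assms(2,3) by metis

lemma lin_push_bij:
  fixes D :: "('a \<Rightarrow> 'k::field) set" and b :: "'a \<Rightarrow> 'b"
  assumes b: "bij_betw b N N'" and D: "D \<subseteq> kpow N"
  shows "lin_push N N' b D = lin_pull N' (inv_into N b) D"
proof (rule set_eqI)
  fix v :: "'b \<Rightarrow> 'k"
  let ?u = "\<lambda>a. if a \<in> N then v (b a) else 0"
  have inv: "\<And>n. n \<in> N' \<Longrightarrow> inv_into N b n \<in> N \<and> b (inv_into N b n) = n"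
    using b by (auto simp: bij_betw_def inv_into_into f_inv_into_f)
  show "v \<in> lin_push N N' b D \<longleftrightarrow> v \<in> lin_pull N' (inv_into N b) D"
  proof
    assume "v \<in> lin_push N N' b D"
    then have v: "v \<in> kpow N'" and u: "?u \<in> D" unfolding lin_push_def by auto
    from v have "v = (\<lambda>n. if n \<in> N' then ?u (inv_into N b n) else 0)"
      using inv by (auto simp: kpow_def)
    then show "v \<in> lin_pull N' (inv_into N b) D"
      unfolding lin_pull_def using u by (rule image_eqI)
  next
    assume "v \<in> lin_pull N' (inv_into N b) D"
    then obtain u where u: "u \<in> D" and v_eq: "v = (\<lambda>n. if n \<in> N' then u (inv_into N b n) else 0)"
      unfolding lin_pull_def by blast
    have "?u a = u a" for a
      using b D u by (cases "a \<in> N") (auto simp: v_eq kpow_def bij_betw_def)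
    then have "?u = u" ..
    then show "v \<in> lin_push N N' b D"
      using u unfolding lin_push_def v_eq by (auto simp: kpow_def)
  qed
qed

lemma lin_pull_lin_push_bij:
  assumes e: "bij_betw e A N" and b: "bij_betw b N N'" and e': "\<And>a. a \<in> A \<Longrightarrow> b (e a) = e' a"
    and D: "D \<subseteq> kpow N"
  shows "lin_pull A e' (lin_push N N' b D) = lin_pull A e D"
proof -
  have eN: "e a \<in> N" if "a \<in> A" for a
    using e that by (rule bij_betw_apply)
  have "e' ` A \<subseteq> N'"
    using bij_betw_apply[OF b] eN e' by (metis image_subsetI)
  then have "lin_pull A e' (lin_push N N' b D) = lin_pull A (\<lambda>a. inv_into N b (e' a)) D"
    unfolding lin_push_bij[OF b D] by (rule lin_pull_lin_pull)
  also have "\<dots> = lin_pull A e D"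
    using b eN e' by (intro lin_pull_cong) (metis bij_betw_imp_inj_on inv_into_f_f)
  finally show ?thesis .
qed

section \<open>Decorated corelations as linear relations\<close>

abbreviation legs :: "('x, 'y, 'k) dcospan \<Rightarrow> 'x + 'y \<Rightarrow> nat" where
  "legs c \<equiv> case_sum (leg_in c) (leg_out c)"

lemma ex_dcospan_bij_legs:
  fixes D :: "nat set \<Rightarrow> ('x + 'y \<Rightarrow> nat) \<Rightarrow> (nat \<Rightarrow> 'k) set"
  assumes "finite X" and "finite Y"
  shows "\<exists>c :: ('x, 'y, 'k) dcospan. finite (apex c) \<and> bij_betw (legs c) (X <+> Y) (apex c)
           \<and> deco c = D (apex c) (legs c)"
proof -
  obtain h where h: "bij_betw h (X <+> Y) {0..<card (X <+> Y)}"
    using ex_bij_betw_finite_nat[OF finite_Plus[OF assms]] by blast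
  let ?c = "\<lparr>apex = {0..<card (X <+> Y)}, leg_in = \<lambda>x. h (Inl x), leg_out = \<lambda>y. h (Inr y),
             deco = D {0..<card (X <+> Y)} h\<rparr> :: ('x, 'y, 'k) dcospan"
  have "legs ?c = h"
    using surjective_sum[of h] by simp
  with h show ?thesis
    by (intro exI[of _ ?c]) simp
qed

lemma
  assumes "is_dcorel X Y c"
  shows is_dcorel_bij_legs: "bij_betw (legs c) (X <+> Y) (apex c)"
    and is_dcorel_lin_subspace: "lin_subspace (apex c) (deco c)"
  using assms unfolding is_dcorel_def by simp_all

lemma
  assumes "is_dcorel X Y c"
  shows is_dcorel_leg_in: "leg_in c ` X \<subseteq> apex c"
    and is_dcorel_leg_out: "leg_out c ` Y \<subseteq> apex c"
  using bij_betw_apply[OF is_dcorel_bij_legs[OF assms], of "Inl x" for x]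
    bij_betw_apply[OF is_dcorel_bij_legs[OF assms], of "Inr y" for y]
  by auto

lemma lin_subspace_to_rel:
  assumes "is_dcorel X Y c"
  shows "lin_subspace (X <+> Y) (to_rel X Y c)"
  unfolding to_rel_def using is_dcorel_lin_subspace[OF assms] by (rule lin_subspace_lin_pull)

lemma dcorel_iso_iff:
  "dcorel_iso X Y c c' \<longleftrightarrow> (\<exists>b. bij_betw b (apex c) (apex c')
     \<and> (\<forall>a\<in>X <+> Y. b (legs c a) = legs c' a) \<and> deco c' = lin_push (apex c) (apex c') b (deco c))"
  unfolding dcorel_iso_def by (simp add: Plus_def ball_Un)

lemma to_rel_eq_iff_dcorel_iso:
  assumes c: "is_dcorel X Y c" and c': "is_dcorel X Y c'"
  shows "to_rel X Y c = to_rel X Y c' \<longleftrightarrow> dcorel_iso X Y c c'"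
proof -
  let ?A = "X <+> Y"
  have e: "bij_betw (legs c) ?A (apex c)" and e': "bij_betw (legs c') ?A (apex c')"
    using is_dcorel_bij_legs[OF c] is_dcorel_bij_legs[OF c'] .
  have D: "deco c \<subseteq> kpow (apex c)" and D': "deco c' \<subseteq> kpow (apex c')"
    using lin_subspace_subset_kpow[OF is_dcorel_lin_subspace[OF c]]
      lin_subspace_subset_kpow[OF is_dcorel_lin_subspace[OF c']] .
  have transport: "to_rel X Y c' = to_rel X Y c \<longleftrightarrow> deco c' = lin_push (apex c) (apex c') b (deco c)"
    if b: "bij_betw b (apex c) (apex c')" and be: "\<forall>a\<in>?A. b (legs c a) = legs c' a" for b
  proof -
    have "to_rel X Y c = lin_pull ?A (legs c') (lin_push (apex c) (apex c') b (deco c))"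
      unfolding to_rel_def using lin_pull_lin_push_bij[OF e b _ D] be by simp
    then show ?thesis
      unfolding to_rel_def using lin_pull_bij_inject[OF e' D'] by (simp add: lin_push_def)
  qed
  show ?thesis
  proof
    assume eq: "to_rel X Y c = to_rel X Y c'"
    define b where "b n = legs c' (inv_into ?A (legs c) n)" for n
    have b: "bij_betw b (apex c) (apex c')"
      unfolding b_def using bij_betw_trans[OF bij_betw_inv_into[OF e] e'] by (simp add: comp_def)
    have be: "\<forall>a\<in>?A. b (legs c a) = legs c' a"
      using e by (simp add: b_def bij_betw_def)
    have "deco c' = lin_push (apex c) (apex c') b (deco c)"
      using transport[OF b be] eq by simp
    with b be show "dcorel_iso X Y c c'"
      unfolding dcorel_iso_iff by blast
  next
    assume "dcorel_iso X Y c c'"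
    then obtain b where b: "bij_betw b (apex c) (apex c')" and be: "\<forall>a\<in>?A. b (legs c a) = legs c' a"
      and "deco c' = lin_push (apex c) (apex c') b (deco c)"
      unfolding dcorel_iso_iff by blast
    then show "to_rel X Y c = to_rel X Y c'"
      using transport[OF b be] by simp
  qed
qed

lemma ex_dcorel_to_rel:
  assumes "finite X" and "finite Y" and R: "lin_subspace (X <+> Y) R"
  shows "\<exists>c :: ('x, 'y, 'k::field) dcospan. is_dcorel X Y c \<and> to_rel X Y c = R"
proof -
  obtain c :: "('x, 'y, 'k) dcospan" where c: "finite (apex c)" "bij_betw (legs c) (X <+> Y) (apex c)"
    and deco: "deco c = lin_pull (apex c) (inv_into (X <+> Y) (legs c)) R"
    using ex_dcospan_bij_legs[OF assms(1,2), of "\<lambda>N e. lin_pull N (inv_into (X <+> Y) e) R"] by blast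
  have "is_dcorel X Y c"
    unfolding is_dcorel_def deco using assms c lin_subspace_lin_pull[OF R] by blast
  moreover have "to_rel X Y c = R"
    unfolding to_rel_def deco
    using lin_pull_bij_inv_into[OF c(2), of "\<lambda>a. a" R] lin_pull_id[OF lin_subspace_subset_kpow[OF R]]
    by simp
  ultimately show ?thesis by blast
qed

section \<open>Composition via pushouts\<close>

lemma po_rel_glued_eq:
  assumes "(a, b) \<in> po_rel N M Y o1 i2" and glued: "\<forall>y\<in>Y. g (Inl (o1 y)) = g (Inr (i2 y))"
  shows "g a = g b"
  using assms(1) unfolding po_rel_def
proof (induction rule: rtrancl_induct)
  case (step b c)
  then show ?case using glued by auto
qed simp

lemma equiv_po_rel: "equiv UNIV (po_rel N M Y o1 i2)"
proof -
  let ?B = "Id_on (N <+> M) \<union> {(Inl (o1 y), Inr (i2 y)) | y. y \<in> Y} \<union> {(Inr (i2 y), Inl (o1 y)) | y. y \<in> Y}"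
  have "sym ?B"
    by (auto simp: sym_def)
  then show ?thesis
    unfolding po_rel_def by (intro equivI refl_rtrancl sym_rtrancl trans_rtrancl) auto
qed

lemma po_inj_glue: "y \<in> Y \<Longrightarrow> po_inj N M Y o1 i2 (Inl (o1 y)) = po_inj N M Y o1 i2 (Inr (i2 y))"
  unfolding po_inj_def by (rule equiv_class_eq[OF equiv_po_rel]) (auto simp: po_rel_def)

lemma po_inj_in_po_apex: "a \<in> N <+> M \<Longrightarrow> po_inj N M Y o1 i2 a \<in> po_apex N M Y o1 i2"
  unfolding po_inj_def po_apex_def by (rule quotientI)

lemma po_apex_factor:
  fixes g :: "nat + nat \<Rightarrow> 'k::field"
  assumes glued: "\<forall>y\<in>Y. g (Inl (o1 y)) = g (Inr (i2 y))"
  obtains v where "v \<in> kpow (po_apex N M Y o1 i2)"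
    and "\<forall>a\<in>N <+> M. v (po_inj N M Y o1 i2 a) = g a"
proof
  let ?P = "po_apex N M Y o1 i2" and ?j = "po_inj N M Y o1 i2"
  define v where "v C = (if C \<in> ?P then g (SOME a. a \<in> C) else 0)" for C
  show "v \<in> kpow ?P"
    by (simp add: v_def kpow_def)
  show "\<forall>a\<in>N <+> M. v (?j a) = g a"
  proof
    fix a assume a: "a \<in> N <+> M"
    have "a \<in> ?j a"
      using equiv_po_rel unfolding po_inj_def by (blast dest: equiv_class_self)
    then have "(SOME a'. a' \<in> ?j a) \<in> ?j a"
      by (rule someI)
    then have "g a = g (SOME a'. a' \<in> ?j a)"
      unfolding po_inj_def by (blast intro: po_rel_glued_eq[OF _ glued])
    moreover have "?j a \<in> ?P"
      using a by (rule po_inj_in_po_apex)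
    ultimately show "v (?j a) = g a"
      by (simp add: v_def)
  qed
qed

definition cospan_comp_rel :: "'x set \<Rightarrow> 'y set \<Rightarrow> 'z set \<Rightarrow> ('x \<Rightarrow> 'n) \<Rightarrow> ('y \<Rightarrow> 'n) \<Rightarrow> ('y \<Rightarrow> 'm) \<Rightarrow> ('z \<Rightarrow> 'm)
    \<Rightarrow> ('n \<Rightarrow> 'k::field) set \<Rightarrow> ('m \<Rightarrow> 'k) set \<Rightarrow> ('x + 'z \<Rightarrow> 'k) set" where
  "cospan_comp_rel X Y Z i1 o1 i2 o2 D1 D2 = {w \<in> kpow (X <+> Z). \<exists>u1\<in>D1. \<exists>u2\<in>D2.
     (\<forall>y\<in>Y. u1 (o1 y) = u2 (i2 y)) \<and> (\<forall>x\<in>X. w (Inl x) = u1 (i1 x)) \<and> (\<forall>z\<in>Z. w (Inr z) = u2 (o2 z))}"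

lemma lrel_comp_lin_pull:
  "lrel_comp X Y Z (lin_pull (X <+> Y) (case_sum i1 o1) D1) (lin_pull (Y <+> Z) (case_sum i2 o2) D2)
     = cospan_comp_rel X Y Z i1 o1 i2 o2 D1 D2"
proof (rule set_eqI, rule iffI)
  fix w
  assume "w \<in> lrel_comp X Y Z (lin_pull (X <+> Y) (case_sum i1 o1) D1) (lin_pull (Y <+> Z) (case_sum i2 o2) D2)"
  then obtain v u1 u2 where w: "w \<in> kpow (X <+> Z)" and u: "u1 \<in> D1" "u2 \<in> D2"
    and eq1: "case_sum (\<lambda>x. w (Inl x)) v = (\<lambda>a. if a \<in> X <+> Y then u1 (case_sum i1 o1 a) else 0)"
    and eq2: "case_sum v (\<lambda>z. w (Inr z)) = (\<lambda>a. if a \<in> Y <+> Z then u2 (case_sum i2 o2 a) else 0)"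
    unfolding lrel_comp_def lin_pull_def by blast
  have "u1 (o1 y) = u2 (i2 y)" if "y \<in> Y" for y
    using fun_cong[OF eq1, of "Inr y"] fun_cong[OF eq2, of "Inl y"] that by auto
  moreover have "w (Inl x) = u1 (i1 x)" if "x \<in> X" for x
    using fun_cong[OF eq1, of "Inl x"] that by auto
  moreover have "w (Inr z) = u2 (o2 z)" if "z \<in> Z" for z
    using fun_cong[OF eq2, of "Inr z"] that by auto
  ultimately show "w \<in> cospan_comp_rel X Y Z i1 o1 i2 o2 D1 D2"
    unfolding cospan_comp_rel_def using w u by blast
next
  fix w
  assume "w \<in> cospan_comp_rel X Y Z i1 o1 i2 o2 D1 D2"
  then obtain u1 u2 where w: "w \<in> kpow (X <+> Z)" and u: "u1 \<in> D1" "u2 \<in> D2"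
    and glued: "\<forall>y\<in>Y. u1 (o1 y) = u2 (i2 y)"
    and wX: "\<forall>x\<in>X. w (Inl x) = u1 (i1 x)" and wZ: "\<forall>z\<in>Z. w (Inr z) = u2 (o2 z)"
    unfolding cospan_comp_rel_def by blast
  define v where "v y = (if y \<in> Y then u1 (o1 y) else 0)" for y
  have "case_sum (\<lambda>x. w (Inl x)) v = (\<lambda>a. if a \<in> X <+> Y then u1 (case_sum i1 o1 a) else 0)"
    using w wX by (auto simp: v_def kpow_def fun_eq_iff split: sum.split)
  then have "case_sum (\<lambda>x. w (Inl x)) v \<in> lin_pull (X <+> Y) (case_sum i1 o1) D1"
    unfolding lin_pull_def using u(1) by (rule image_eqI)
  moreover have "case_sum v (\<lambda>z. w (Inr z)) = (\<lambda>a. if a \<in> Y <+> Z then u2 (case_sum i2 o2 a) else 0)"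
    using w wZ glued by (auto simp: v_def kpow_def fun_eq_iff split: sum.split)
  then have "case_sum v (\<lambda>z. w (Inr z)) \<in> lin_pull (Y <+> Z) (case_sum i2 o2) D2"
    unfolding lin_pull_def using u(2) by (rule image_eqI)
  moreover have "v \<in> kpow Y"
    by (simp add: v_def kpow_def)
  ultimately show "w \<in> lrel_comp X Y Z (lin_pull (X <+> Y) (case_sum i1 o1) D1)
      (lin_pull (Y <+> Z) (case_sum i2 o2) D2)"
    unfolding lrel_comp_def using w by blast
qed

lemma lin_pull_pushout:
  fixes D1 D2 :: "(nat \<Rightarrow> 'k::field) set"
  assumes i1: "i1 ` X \<subseteq> N" and o1: "o1 ` Y \<subseteq> N" and i2: "i2 ` Y \<subseteq> M" and o2: "o2 ` Z \<subseteq> M"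
    and D1: "D1 \<subseteq> kpow N" and D2: "D2 \<subseteq> kpow M"
  shows "lin_pull (X <+> Z)
           (case_sum (\<lambda>x. po_inj N M Y o1 i2 (Inl (i1 x))) (\<lambda>z. po_inj N M Y o1 i2 (Inr (o2 z))))
           (lin_push (N <+> M) (po_apex N M Y o1 i2) (po_inj N M Y o1 i2) (lin_sum N M D1 D2))
         = cospan_comp_rel X Y Z i1 o1 i2 o2 D1 D2"
    (is "lin_pull _ ?f (lin_push _ ?P ?j ?S) = _")
proof (rule set_eqI, rule iffI)
  fix w
  assume "w \<in> lin_pull (X <+> Z) ?f (lin_push (N <+> M) ?P ?j ?S)"
  then obtain v where w: "w = (\<lambda>a. if a \<in> X <+> Z then v (?f a) else 0)"
    and vS: "(\<lambda>a. if a \<in> N <+> M then v (?j a) else 0) \<in> ?S"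
    unfolding lin_pull_def lin_push_def by blast
  have u1: "(\<lambda>n. if n \<in> N then v (?j (Inl n)) else 0) \<in> D1"
    and u2: "(\<lambda>m. if m \<in> M then v (?j (Inr m)) else 0) \<in> D2"
    using vS unfolding lin_sum_def by simp_all
  have "(if o1 y \<in> N then v (?j (Inl (o1 y))) else 0) = (if i2 y \<in> M then v (?j (Inr (i2 y))) else 0)"
    if "y \<in> Y" for y
    using that o1 i2 po_inj_glue[OF that] by auto
  then show "w \<in> cospan_comp_rel X Y Z i1 o1 i2 o2 D1 D2"
    unfolding cospan_comp_rel_def using u1 u2 i1 o2
    by (intro CollectI conjI bexI[OF _ u1] bexI[OF _ u2]) (auto simp: w kpow_def)
next
  fix w
  assume "w \<in> cospan_comp_rel X Y Z i1 o1 i2 o2 D1 D2"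
  then obtain u1 u2 where w: "w \<in> kpow (X <+> Z)" and u: "u1 \<in> D1" "u2 \<in> D2"
    and glued: "\<forall>y\<in>Y. u1 (o1 y) = u2 (i2 y)"
    and wX: "\<forall>x\<in>X. w (Inl x) = u1 (i1 x)" and wZ: "\<forall>z\<in>Z. w (Inr z) = u2 (o2 z)"
    unfolding cospan_comp_rel_def by blast
  obtain v where v: "v \<in> kpow ?P" and vj: "\<forall>a\<in>N <+> M. v (?j a) = case_sum u1 u2 a"
    using po_apex_factor[of Y "case_sum u1 u2" o1 i2] glued by auto
  have "(\<lambda>a. if a \<in> N <+> M then v (?j a) else 0) = case_sum u1 u2"
    using vj u D1 D2 by (auto simp: kpow_def fun_eq_iff split: sum.split)
  moreover have "case_sum u1 u2 \<in> ?S"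
    using u D1 D2 unfolding lin_sum_def by (auto simp: kpow_def split: sum.split)
  ultimately have "v \<in> lin_push (N <+> M) ?P ?j ?S"
    using v unfolding lin_push_def by simp
  moreover have "w = (\<lambda>a. if a \<in> X <+> Z then v (?f a) else 0)"
    using w wX wZ vj i1 o2 by (auto simp: kpow_def fun_eq_iff image_subset_iff split: sum.split)
  ultimately show "w \<in> lin_pull (X <+> Z) ?f (lin_push (N <+> M) ?P ?j ?S)"
    unfolding lin_pull_def by blast
qed

lemma ex_dcorel_comp:
  assumes "finite X" and "finite Z"
  shows "\<exists>c. is_dcorel_comp X Y Z c1 c2 c"
  unfolding is_dcorel_comp_def Let_def by (rule ex_dcospan_bij_legs[OF assms])

lemma dcorel_comp_to_rel:
  assumes "finite X" and "finite Z"
    and c1: "is_dcorel X Y c1" and c2: "is_dcorel Y Z c2" and c: "is_dcorel_comp X Y Z c1 c2 c"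
  shows "is_dcorel X Z c \<and> to_rel X Z c = lrel_comp X Y Z (to_rel X Y c1) (to_rel Y Z c2)"
proof -
  let ?N = "apex c1" and ?M = "apex c2"
  let ?j = "po_inj ?N ?M Y (leg_out c1) (leg_in c2)" and ?P = "po_apex ?N ?M Y (leg_out c1) (leg_in c2)"
  let ?f = "case_sum (\<lambda>x. ?j (Inl (leg_in c1 x))) (\<lambda>z. ?j (Inr (leg_out c2 z)))"
  let ?Q = "lin_push (?N <+> ?M) ?P ?j (lin_sum ?N ?M (deco c1) (deco c2))"
  have c_legs: "finite (apex c)" "bij_betw (legs c) (X <+> Z) (apex c)"
    and c_deco: "deco c = lin_pull (apex c) (\<lambda>n. ?f (inv_into (X <+> Z) (legs c) n)) ?Q"
    using c unfolding is_dcorel_comp_def Let_def by auto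
  have "lin_subspace ?P ?Q"
    using c1 c2 by (intro lin_subspace_lin_push lin_subspace_lin_sum is_dcorel_lin_subspace)
  then have dcorel: "is_dcorel X Z c"
    unfolding is_dcorel_def c_deco using assms(1,2) c_legs by (blast intro: lin_subspace_lin_pull)
  have "to_rel X Z c = lin_pull (X <+> Z) ?f ?Q"
    unfolding to_rel_def c_deco using c_legs(2) by (rule lin_pull_bij_inv_into)
  also have "\<dots> = cospan_comp_rel X Y Z (leg_in c1) (leg_out c1) (leg_in c2) (leg_out c2) (deco c1) (deco c2)"
    using c1 c2 by (intro lin_pull_pushout is_dcorel_leg_in is_dcorel_leg_out
        lin_subspace_subset_kpow is_dcorel_lin_subspace)
  also have "\<dots> = lrel_comp X Y Z (to_rel X Y c1) (to_rel Y Z c2)"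
    unfolding to_rel_def by (rule lrel_comp_lin_pull[symmetric])
  finally show ?thesis
    using dcorel by blast
qed

section \<open>Identities\<close>

lemma ex_dcorel_id:
  assumes "finite X"
  shows "\<exists>c. is_dcorel_id X c"
  unfolding is_dcorel_id_def Let_def by (rule ex_dcospan_bij_legs[OF assms assms])

lemma lin_push_kpow_empty: "lin_push {} B f (kpow {}) = kpow B"
  by (simp add: lin_push_def kpow_def)

lemma lrel_id_eq_lin_pull: "lrel_id X = lin_pull (X <+> X) (case_sum id id) (kpow X)"
proof (rule set_eqI, rule iffI)
  fix w :: "'a + 'a \<Rightarrow> 'b"
  assume w: "w \<in> lrel_id X"
  then have "w = (\<lambda>a. if a \<in> X <+> X then (\<lambda>x. w (Inl x)) (case_sum id id a) else 0)"
    unfolding lrel_id_def kpow_def by (auto simp: fun_eq_iff split: sum.split)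
  moreover have "(\<lambda>x. w (Inl x)) \<in> kpow X"
    using w unfolding lrel_id_def kpow_def by simp
  ultimately show "w \<in> lin_pull (X <+> X) (case_sum id id) (kpow X)"
    unfolding lin_pull_def by (rule image_eqI)
qed (auto simp: lin_pull_def lrel_id_def kpow_def)

lemma dcorel_id_to_rel:
  assumes "finite X" and c: "is_dcorel_id X c"
  shows "is_dcorel X X c \<and> to_rel X X c = lrel_id X"
proof -
  let ?m = "\<lambda>n. case_sum id id (inv_into (X <+> X) (legs c) n)"
  have c_legs: "finite (apex c)" "bij_betw (legs c) (X <+> X) (apex c)"
    and c_deco: "deco c = lin_pull (apex c) ?m (kpow X)"
    using c unfolding is_dcorel_id_def Let_def lin_push_kpow_empty by auto
  have "is_dcorel X X c"
    unfolding is_dcorel_def c_deco using assms(1) c_legs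
    by (blast intro: lin_subspace_lin_pull lin_subspace_kpow)
  moreover have "to_rel X X c = lrel_id X"
    unfolding to_rel_def c_deco lin_pull_bij_inv_into[OF c_legs(2)] by (rule lrel_id_eq_lin_pull[symmetric])
  ultimately show ?thesis ..
qed

theorem mainTheorem15:
  fixes X :: "'x set" and Y :: "'y set" and Z :: "'z set"
  assumes "finite X" and "finite Y" and "finite Z"
  shows
    "(\<forall>c :: ('x, 'y, 'k::field) dcospan. is_dcorel X Y c \<longrightarrow> lin_subspace (X <+> Y) (to_rel X Y c))
   \<and> (\<forall>c c' :: ('x, 'y, 'k) dcospan. is_dcorel X Y c \<longrightarrow> is_dcorel X Y c' \<longrightarrow>
        (to_rel X Y c = to_rel X Y c' \<longleftrightarrow> dcorel_iso X Y c c'))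
   \<and> (\<forall>R :: ('x + 'y \<Rightarrow> 'k) set. lin_subspace (X <+> Y) R \<longrightarrow>
        (\<exists>c :: ('x, 'y, 'k) dcospan. is_dcorel X Y c \<and> to_rel X Y c = R))
   \<and> (\<forall>(c1 :: ('x, 'y, 'k) dcospan) (c2 :: ('y, 'z, 'k) dcospan). is_dcorel X Y c1 \<longrightarrow> is_dcorel Y Z c2 \<longrightarrow>
        (\<exists>c. is_dcorel_comp X Y Z c1 c2 c)
      \<and> (\<forall>c. is_dcorel_comp X Y Z c1 c2 c \<longrightarrow>
           is_dcorel X Z c \<and> to_rel X Z c = lrel_comp X Y Z (to_rel X Y c1) (to_rel Y Z c2)))
   \<and> (\<exists>c :: ('x, 'x, 'k) dcospan. is_dcorel_id X c)
   \<and> (\<forall>c :: ('x, 'x, 'k) dcospan. is_dcorel_id X c \<longrightarrow> is_dcorel X X c \<and> to_rel X X c = lrel_id X)"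
proof (intro conjI allI impI)
  fix c c' :: "('x, 'y, 'k) dcospan"
  assume "is_dcorel X Y c"
  then show "lin_subspace (X <+> Y) (to_rel X Y c)"
    by (rule lin_subspace_to_rel)
  assume "is_dcorel X Y c'"
  with \<open>is_dcorel X Y c\<close> show "to_rel X Y c = to_rel X Y c' \<longleftrightarrow> dcorel_iso X Y c c'"
    by (rule to_rel_eq_iff_dcorel_iso)
next
  fix R :: "('x + 'y \<Rightarrow> 'k) set"
  assume "lin_subspace (X <+> Y) R"
  with assms(1,2) show "\<exists>c :: ('x, 'y, 'k) dcospan. is_dcorel X Y c \<and> to_rel X Y c = R"
    by (rule ex_dcorel_to_rel)
next
  fix c1 :: "('x, 'y, 'k) dcospan" and c2 :: "('y, 'z, 'k) dcospan"
  show "\<exists>c. is_dcorel_comp X Y Z c1 c2 c"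
    using assms(1,3) by (rule ex_dcorel_comp)
  fix c
  assume "is_dcorel X Y c1" "is_dcorel Y Z c2" "is_dcorel_comp X Y Z c1 c2 c"
  with assms(1,3) show "is_dcorel X Z c" "to_rel X Z c = lrel_comp X Y Z (to_rel X Y c1) (to_rel Y Z c2)"
    by (blast dest: dcorel_comp_to_rel)+
next
  show "\<exists>c :: ('x, 'x, 'k) dcospan. is_dcorel_id X c"
    using assms(1) by (rule ex_dcorel_id)
  fix c :: "('x, 'x, 'k) dcospan"
  assume "is_dcorel_id X c"
  with assms(1) show "is_dcorel X X c" "to_rel X X c = lrel_id X"
    by (blast dest: dcorel_id_to_rel)+
qed

end
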